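(* Let $X$ be a non-empty finite set and $\mathcal{P}=\{P_1,\ldots,P_n\}$ a partition of $X$ indexed so that $|P_i|\le|P_{i+1}|$, with distinct block sizes $l_1<\cdots<l_r$. If $f\in\Sigma(X,\mathcal{P})$, then there exists a companion of $\overline{f}$ in the subsemigroup generated by $S(X,\mathcal{P})\cup\mathcal{B}$.
   Context: Maps are written on the right and composed left to right. $T(X,\mathcal{P})$ is the semigroup of maps $f:X\to X$ mapping each block of $\mathcal{P}$ into some block; $S(X,\mathcal{P})$ is its group of units; $\Sigma(X,\mathcal{P})$ is the set of $f\in T(X,\mathcal{P})$ whose image intersects every block. For $f\in T(X,\mathcal{P})$, $\overline{f}$ is the map on $\{1,\ldots,n\}$ with $(i)\overline{f}=j$ whenever $P_if\subseteq P_j$ (for $f\in\Sigma(X,\mathcal{P})$ this is a permutation). For $i\le r-1$, $\mathcal{B}_i$ is the set of $f\in\Sigma(X,\mathcal{P})$ for which there are blocks $P_j,P_{j'},P_k,P_{k'}$ (possibly $j=j'$ or $k=k'$) with $|P_j|=|P_{j'}|=l_i$, $|P_k|=|P_{k'}|=l_{i+1}$, such that $f$ maps $P_j$ injectively into $P_k$, maps $P_{k'}$ onto $P_{j'}$, and maps every other block bijectively onto a block of the same size; $\mathcal{B}=\bigcup_{i=1}^{r-1}\mathcal{B}_i$. For a permutation $\pi$ of $\{1,\ldots,n\}$, a companion of $\pi$ is a $g\in\Sigma(X,\mathcal{P})$ with $\overline{g}=\pi$ such that $g|_{P_i}:P_i\to P_{(i)\pi}$ is injective whenever $|P_i|\le|P_{(i)\pi}|$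 and surjective whenever $|P_i|\ge|P_{(i)\pi}|$. *)

theory Defs
  imports Main
begin

text \<open>Maps X \<Rightarrow> X are represented as functions 'a \<Rightarrow> 'a that are the identity
outside X.
Composition is written right-to-left (g \<circ> f); since the generated
subsemigroup is closed under composition in both orders, this does not affect it.\<close>

definition Tpart :: "'a set \<Rightarrow> nat \<Rightarrow> (nat \<Rightarrow> 'a set) \<Rightarrow> ('a \<Rightarrow> 'a) set" where
  "Tpart X n P = {f. (\<forall>x\<in>X. f x \<in> X) \<and> (\<forall>x. x \<notin> X \<longrightarrow> f x = x) \<and>
                     (\<forall>i\<in>{1..n}. \<exists>j\<in>{1..n}. f ` P i \<subseteq> P j)}"

definition Spart :: "'a set \<Rightarrow> nat \<Rightarrow> (nat \<Rightarrow> 'a set) \<Rightarrow> ('a \<Rightarrow> 'a) set" where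
  "Spart X n P = {f \<in> Tpart X n P. \<exists>g \<in> Tpart X n P. g \<circ> f = id \<and> f \<circ> g = id}"

definition Sigmapart :: "'a set \<Rightarrow> nat \<Rightarrow> (nat \<Rightarrow> 'a set) \<Rightarrow> ('a \<Rightarrow> 'a) set" where
  "Sigmapart X n P = {f \<in> Tpart X n P. \<forall>i\<in>{1..n}. f ` X \<inter> P i \<noteq> {}}"

definition fbar :: "nat \<Rightarrow> (nat \<Rightarrow> 'a set) \<Rightarrow> ('a \<Rightarrow> 'a) \<Rightarrow> nat \<Rightarrow> nat" where
  "fbar n P f i = (THE j. j \<in> {1..n} \<and> f ` P i \<subseteq> P j)"

text \<open>Distinct block sizes l_1 < ... < l_r (indexed from 1) and r.\<close>
definition bsizes :: "nat \<Rightarrow> (nat \<Rightarrow> 'a set) \<Rightarrow> nat set" where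
  "bsizes n P = (\<lambda>i. card (P i)) ` {1..n}"

definition lsize :: "nat \<Rightarrow> (nat \<Rightarrow> 'a set) \<Rightarrow> nat \<Rightarrow> nat" where
  "lsize n P i = sorted_list_of_set (bsizes n P) ! (i - 1)"

definition rnum :: "nat \<Rightarrow> (nat \<Rightarrow> 'a set) \<Rightarrow> nat" where
  "rnum n P = card (bsizes n P)"

definition Bpart_i :: "'a set \<Rightarrow> nat \<Rightarrow> (nat \<Rightarrow> 'a set) \<Rightarrow> nat \<Rightarrow> ('a \<Rightarrow> 'a) set" where
  "Bpart_i X n P i = {f \<in> Sigmapart X n P.
     \<exists>j\<in>{1..n}. \<exists>j'\<in>{1..n}. \<exists>k\<in>{1..n}. \<exists>k'\<in>{1..n}.
       card (P j) = lsize n P i \<and> card (P j') = lsize n P i \<and>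
       card (P k) = lsize n P (i + 1) \<and> card (P k') = lsize n P (i + 1) \<and>
       inj_on f (P j) \<and> f ` P j \<subseteq> P k \<and>
       f ` P k' = P j' \<and>
       (\<forall>m\<in>{1..n} - {j, k'}. \<exists>m'\<in>{1..n}. bij_betw f (P m) (P m') \<and> card (P m') = card (P m))}"

definition Bpart :: "'a set \<Rightarrow> nat \<Rightarrow> (nat \<Rightarrow> 'a set) \<Rightarrow> ('a \<Rightarrow> 'a) set" where
  "Bpart X n P = (\<Union>i\<in>{1..rnum n P - 1}. Bpart_i X n P i)"

inductive_set gensemi :: "('a \<Rightarrow> 'a) set \<Rightarrow> ('a \<Rightarrow> 'a) set" for A where
  base: "f \<in> A \<Longrightarrow> f \<in> gensemi A"
| comp: "f \<in> gensemi A \<Longrightarrow> g \<in> gensemi A \<Longrightarrow> g \<circ> f \<in> gensemi A"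

definition companion :: "'a set \<Rightarrow> nat \<Rightarrow> (nat \<Rightarrow> 'a set) \<Rightarrow> (nat \<Rightarrow> nat) \<Rightarrow> ('a \<Rightarrow> 'a) \<Rightarrow> bool" where
  "companion X n P \<pi> g \<longleftrightarrow> g \<in> Sigmapart X n P \<and>
     (\<forall>i\<in>{1..n}. fbar n P g i = \<pi> i) \<and>
     (\<forall>i\<in>{1..n}. (card (P i) \<le> card (P (\<pi> i)) \<longrightarrow> inj_on g (P i)) \<and>
                 (card (P (\<pi> i)) \<le> card (P i) \<longrightarrow> g ` P i = P (\<pi> i)))"

end

theory Submission
  imports Defs "HOL-Combinatorics.Transposition"
begin

text \<open>Enumerate every block. For a permutation \<pi> of the block indices, let the canonical map send
the k-th element of P a to the k-th element of P (\<pi> a), clamped to the last one; it is a companion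
of \<pi>, and a unit when \<pi> preserves block sizes. Otherwise there are blocks b, c of consecutive sizes
such that, with \<tau> the transposition of b and c, the canonical map of \<pi> factors as that of \<pi> \<circ> \<tau>
after that of \<tau>; the latter lies in B, and \<pi> \<circ> \<tau> has a strictly smaller size defect, the sum
of the squares (|P (\<pi> a)| - |P a|)^2. Induction on the defect finishes the proof.\<close>

lemma sorted_list_of_set_consecutive:
  fixes A :: "'b::linorder set"
  assumes "finite A" and "s \<in> A" and "t \<in> A" and "s < t"
    and no_between: "\<forall>u\<in>A. u < t \<longrightarrow> u \<le> s"
  obtains i where "Suc i < card A" "sorted_list_of_set A ! i = s" "sorted_list_of_set A ! Suc i = t"
proof -
  define L where "L = sorted_list_of_set A"
  have set_L: "set L = A" and len_L: "length L = card A"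
    using \<open>finite A\<close> by (simp_all add: L_def)
  have sorted_L: "sorted_wrt (<) L"
    unfolding L_def by (rule strict_sorted_list_of_set)
  obtain i where i: "i < length L" "L ! i = s"
    using \<open>s \<in> A\<close> set_L by (metis in_set_conv_nth)
  obtain j where j: "j < length L" "L ! j = t"
    using \<open>t \<in> A\<close> set_L by (metis in_set_conv_nth)
  have "i < j"
    using sorted_wrt_nth_less[OF sorted_L, of j i] i j \<open>s < t\<close> by (metis less_asym linorder_neqE_nat)
  have "j = Suc i"
  proof (rule ccontr)
    assume "j \<noteq> Suc i"
    with \<open>i < j\<close> have "Suc i < j" by simp
    then have "s < L ! Suc i" "L ! Suc i < t" "L ! Suc i \<in> A"
      using sorted_wrt_nth_less[OF sorted_L] i j set_L by (auto intro: nth_mem)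
    then show False
      using no_between by fastforce
  qed
  then show thesis
    using that i j len_L by (simp add: L_def)
qed

lemma bij_betw_weight_decreases_somewhere:
  fixes w :: "'b \<Rightarrow> nat"
  assumes "finite I" and \<pi>: "bij_betw \<pi> I I" and "\<exists>a\<in>I. w (\<pi> a) \<noteq> w a"
  shows "\<exists>b\<in>I. w (\<pi> b) < w b"
proof (rule ccontr)
  assume "\<not> ?thesis"
  then have le: "\<forall>a\<in>I. w a \<le> w (\<pi> a)"
    by (simp add: not_less)
  with assms(3) have "\<exists>a\<in>I. w a < w (\<pi> a)"
    by (metis le_neq_implies_less)
  then have "(\<Sum>a\<in>I. w a) < (\<Sum>a\<in>I. w (\<pi> a))"
    using sum_strict_mono_ex1[OF \<open>finite I\<close> le] by blast
  moreover have "(\<Sum>a\<in>I. w (\<pi> a)) = (\<Sum>a\<in>I. w a)"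
    using sum.reindex_bij_betw[OF \<pi>] .
  ultimately show False
    by simp
qed

text \<open>Take b of least weight among the elements that \<pi> moves to a lighter one, and let s be the
largest weight below w b. Were \<pi> to map every element of weight s to weight at most w (\<pi> b),
it would map b and all elements of weight s injectively into the elements of weight s.\<close>

lemma exchangeable_pair_exists:
  fixes w :: "'b \<Rightarrow> nat"
  assumes "finite I" and \<pi>: "bij_betw \<pi> I I" and "\<exists>a\<in>I. w (\<pi> a) \<noteq> w a"
  obtains b c where "b \<in> I" "c \<in> I" "w c < w b" "\<forall>a\<in>I. w a < w b \<longrightarrow> w a \<le> w c"
    "w (\<pi> b) \<le> w c" "w (\<pi> b) < w (\<pi> c)"
proof -
  define D where "D = {a\<in>I. w (\<pi> a) < w a}"
  have "\<exists>b. b \<in> D"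
    using bij_betw_weight_decreases_somewhere[OF assms] by (auto simp: D_def)
  then obtain b where "b \<in> D" and b_min: "\<And>d. d \<in> D \<Longrightarrow> w b \<le> w d"
    using ex_has_least_nat[of "\<lambda>d. d \<in> D" _ w] by blast
  then have b: "b \<in> I" "w (\<pi> b) < w b"
    by (auto simp: D_def)
  have \<pi>b: "\<pi> b \<in> I"
    using \<pi> b(1) bij_betwE by blast
  define S where "S = w ` {a\<in>I. w a < w b}"
  have "finite S" "w (\<pi> b) \<in> S"
    using \<open>finite I\<close> \<pi>b b(2) by (auto simp: S_def)
  define s where "s = Max S"
  have s_max: "\<forall>a\<in>I. w a < w b \<longrightarrow> w a \<le> s"
    using \<open>finite S\<close> by (auto simp: s_def S_def)
  have "s \<in> S"
    using \<open>finite S\<close> \<open>w (\<pi> b) \<in> S\<close> s_def by (metis Max_in empty_iff)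
  then obtain c0 where c0: "c0 \<in> I" "w c0 = s" and "s < w b"
    by (auto simp: S_def)
  have \<pi>b_le: "w (\<pi> b) \<le> s"
    using s_max \<pi>b b(2) by blast
  define C where "C = {a\<in>I. w a = s}"
  have C_up: "s \<le> w (\<pi> c)" if "c \<in> C" for c
  proof -
    have "c \<notin> D"
      using b_min that \<open>s < w b\<close> by (fastforce simp: C_def)
    then show ?thesis
      using that by (auto simp: C_def D_def)
  qed
  have "\<exists>c\<in>C. w (\<pi> b) < w (\<pi> c)"
  proof (rule ccontr)
    assume none: "\<not> ?thesis"
    then have C_fixed: "w (\<pi> c) = s" if "c \<in> C" for c
      using that C_up \<pi>b_le by fastforce
    then have "w (\<pi> b) = s"
      using none c0 C_up[of c0] \<pi>b_le by (auto simp: C_def)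
    then have "\<pi> ` insert b C \<subseteq> C"
      using C_fixed \<pi>b \<pi> by (auto simp: C_def bij_betw_def)
    moreover have "inj_on \<pi> (insert b C)"
      by (intro inj_on_subset[OF bij_betw_imp_inj_on[OF \<pi>]]) (auto simp: C_def b(1))
    moreover have "finite C"
      using \<open>finite I\<close> by (simp add: C_def)
    ultimately have "card (insert b C) \<le> card C"
      by (intro card_inj_on_le)
    moreover have "b \<notin> C"
      using \<open>s < w b\<close> by (simp add: C_def)
    ultimately show False
      using \<open>finite I\<close> by (simp add: C_def)
  qed
  then show thesis
    using that b \<open>s < w b\<close> s_max \<pi>b_le by (auto simp: C_def)
qed

definition size_defect :: "('b \<Rightarrow> nat) \<Rightarrow> 'b set \<Rightarrow> ('b \<Rightarrow> 'b) \<Rightarrow> int" where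
  "size_defect w I \<pi> = (\<Sum>a\<in>I. (int (w (\<pi> a)) - int (w a))\<^sup>2)"

lemma size_defect_nonneg: "0 \<le> size_defect w I \<pi>"
  unfolding size_defect_def by (simp add: sum_nonneg)

lemma size_defect_comp_transpose_less:
  fixes w :: "'b \<Rightarrow> nat"
  assumes "finite I" and "b \<in> I" and "c \<in> I" and "w c < w b" and "w (\<pi> b) < w (\<pi> c)"
  shows "size_defect w I (\<pi> \<circ> transpose b c) < size_defect w I \<pi>"
proof -
  define gain where "gain a = (int (w (\<pi> a)) - int (w a))\<^sup>2
    - (int (w (\<pi> (transpose b c a))) - int (w a))\<^sup>2" for a
  have "b \<noteq> c"
    using \<open>w c < w b\<close> by auto
  have "size_defect w I \<pi> - size_defect w I (\<pi> \<circ> transpose b c) = (\<Sum>a\<in>I. gain a)"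
    unfolding size_defect_def gain_def by (simp add: sum_subtractf)
  also have "\<dots> = (\<Sum>a\<in>{b, c}. gain a)"
    using assms(1-3) by (intro sum.mono_neutral_right) (auto simp: gain_def)
  also have "\<dots> = 2 * (int (w b) - int (w c)) * (int (w (\<pi> c)) - int (w (\<pi> b)))"
    using \<open>b \<noteq> c\<close> by (simp add: gain_def power2_eq_square algebra_simps)
  also have "\<dots> > 0"
    using assms(4,5) by simp
  finally show ?thesis
    by simp
qed

lemma lsize_consecutive:
  fixes P :: "nat \<Rightarrow> 'a set"
  assumes "c \<in> {1..n}" and "b \<in> {1..n}" and "card (P c) < card (P b)"
    and "\<forall>a\<in>{1..n}. card (P a) < card (P b) \<longrightarrow> card (P a) \<le> card (P c)"
  obtains i where "i \<in> {1..rnum n P - 1}" "lsize n P i = card (P c)" "lsize n P (i + 1) = card (P b)"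
proof -
  have "finite (bsizes n P)"
    by (simp add: bsizes_def)
  then obtain j where "Suc j < rnum n P" "sorted_list_of_set (bsizes n P) ! j = card (P c)"
      "sorted_list_of_set (bsizes n P) ! Suc j = card (P b)"
    using sorted_list_of_set_consecutive[of "bsizes n P" "card (P c)" "card (P b)"] assms
    unfolding rnum_def bsizes_def by blast
  then show thesis
    by (intro that[of "Suc j"]) (auto simp: lsize_def)
qed

locale block_partition =
  fixes X :: "'a set" and n :: nat and P :: "nat \<Rightarrow> 'a set"
  assumes finite_X: "finite X"
    and block_nonempty: "\<forall>i\<in>{1..n}. P i \<noteq> {}"
    and blocks_disjoint: "\<forall>i\<in>{1..n}. \<forall>j\<in>{1..n}. i \<noteq> j \<longrightarrow> P i \<inter> P j = {}"
    and blocks_cover: "(\<Union>i\<in>{1..n}. P i) = X"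
begin

lemma block_subset: "a \<in> {1..n} \<Longrightarrow> P a \<subseteq> X"
  using blocks_cover by blast

lemma finite_block: "a \<in> {1..n} \<Longrightarrow> finite (P a)"
  using block_subset finite_X finite_subset by blast

lemma card_block_pos: "a \<in> {1..n} \<Longrightarrow> 0 < card (P a)"
  using finite_block block_nonempty by (simp add: card_gt_0_iff)

lemma block_eqI: "a \<in> {1..n} \<Longrightarrow> b \<in> {1..n} \<Longrightarrow> x \<in> P a \<Longrightarrow> x \<in> P b \<Longrightarrow> a = b"
  using blocks_disjoint by blast

definition enum :: "nat \<Rightarrow> nat \<Rightarrow> 'a" where
  "enum a = (SOME h. bij_betw h {0..<card (P a)} (P a))"

lemma bij_betw_enum: "a \<in> {1..n} \<Longrightarrow> bij_betw (enum a) {0..<card (P a)} (P a)"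
  unfolding enum_def by (rule someI_ex[OF ex_bij_betw_nat_finite[OF finite_block]])

lemma enum_in_block: "a \<in> {1..n} \<Longrightarrow> k < card (P a) \<Longrightarrow> enum a k \<in> P a"
  using bij_betw_enum bij_betwE by fastforce

lemma block_elem_enum:
  assumes "a \<in> {1..n}" and "x \<in> P a"
  obtains k where "k < card (P a)" "x = enum a k"
  using bij_betw_enum[OF assms(1)] assms(2) by (metis atLeastLessThan_iff bij_betw_iff_bijections)

lemma elem_enum:
  assumes "x \<in> X"
  obtains a k where "a \<in> {1..n}" "k < card (P a)" "x = enum a k"
  using assms blocks_cover block_elem_enum by blast

definition block_of :: "'a \<Rightarrow> nat" where
  "block_of x = (THE a. a \<in> {1..n} \<and> x \<in> P a)"

definition index_of :: "'a \<Rightarrow> nat" where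
  "index_of x = (THE k. k < card (P (block_of x)) \<and> enum (block_of x) k = x)"

lemma block_of_index_of_enum:
  assumes a: "a \<in> {1..n}" and k: "k < card (P a)"
  shows "block_of (enum a k) = a" and "index_of (enum a k) = k"
proof -
  show block: "block_of (enum a k) = a"
    unfolding block_of_def using a enum_in_block[OF a k] block_eqI by blast
  have "inj_on (enum a) {0..<card (P a)}"
    using bij_betw_enum[OF a] by (rule bij_betw_imp_inj_on)
  then show "index_of (enum a k) = k"
    unfolding index_of_def block using k by (auto simp: inj_on_def)
qed

definition canonical_map :: "(nat \<Rightarrow> nat) \<Rightarrow> 'a \<Rightarrow> 'a" where
  "canonical_map \<pi> x = (if x \<in> X
     then enum (\<pi> (block_of x)) (min (index_of x) (card (P (\<pi> (block_of x))) - 1)) else x)"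

lemma canonical_map_enum:
  assumes "a \<in> {1..n}" and "k < card (P a)"
  shows "canonical_map \<pi> (enum a k) = enum (\<pi> a) (min k (card (P (\<pi> a)) - 1))"
  using assms block_of_index_of_enum[OF assms] enum_in_block[OF assms] block_subset
  by (auto simp: canonical_map_def)

lemma canonical_map_outside: "x \<notin> X \<Longrightarrow> canonical_map \<pi> x = x"
  by (simp add: canonical_map_def)

lemma canonical_map_cong: "\<forall>a\<in>{1..n}. \<pi> a = \<sigma> a \<Longrightarrow> canonical_map \<pi> = canonical_map \<sigma>"
proof
  fix x
  assume "\<forall>a\<in>{1..n}. \<pi> a = \<sigma> a"
  then show "canonical_map \<pi> x = canonical_map \<sigma> x"
    by (cases "x \<in> X") (auto elim!: elem_enum simp: canonical_map_enum canonical_map_outside)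
qed

lemma canonical_map_id: "canonical_map id = id"
proof
  fix x
  show "canonical_map id x = id x"
    by (cases "x \<in> X") (auto elim!: elem_enum simp: canonical_map_enum canonical_map_outside)
qed

text \<open>The hypothesis says that the intermediate clamp into P (\<sigma> a) never bites, so clamping twice
is clamping once into P (\<tau> (\<sigma> a)).\<close>

lemma canonical_map_comp:
  assumes \<sigma>: "\<forall>a\<in>{1..n}. \<sigma> a \<in> {1..n}"
    and no_bottleneck: "\<forall>a\<in>{1..n}. min (card (P a)) (card (P (\<tau> (\<sigma> a)))) \<le> card (P (\<sigma> a))"
  shows "canonical_map \<tau> \<circ> canonical_map \<sigma> = canonical_map (\<tau> \<circ> \<sigma>)"
proof
  fix x
  show "(canonical_map \<tau> \<circ> canonical_map \<sigma>) x = canonical_map (\<tau> \<circ> \<sigma>) x"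
  proof (cases "x \<in> X")
    case True
    then obtain a k where a: "a \<in> {1..n}" and k: "k < card (P a)" and x: "x = enum a k"
      by (rule elem_enum)
    have \<sigma>a: "\<sigma> a \<in> {1..n}"
      using \<sigma> a by blast
    have "min (min k (card (P (\<sigma> a)) - 1)) (card (P (\<tau> (\<sigma> a))) - 1)
        = min k (card (P (\<tau> (\<sigma> a))) - 1)"
    proof -
      have "min (card (P a)) (card (P (\<tau> (\<sigma> a)))) \<le> card (P (\<sigma> a))"
        using no_bottleneck a by blast
      then show ?thesis
        using k by (simp add: min_def split: if_splits; linarith)
    qed
    moreover have "min k (card (P (\<sigma> a)) - 1) < card (P (\<sigma> a))"
      using card_block_pos[OF \<sigma>a] by linarith
    ultimately show ?thesis
      using x by (simp add: canonical_map_enum[OF a k] canonical_map_enum[OF \<sigma>a])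
  qed (simp add: canonical_map_outside)
qed

lemma canonical_map_block:
  assumes "a \<in> {1..n}" and "\<pi> a \<in> {1..n}" and "x \<in> P a"
  shows "canonical_map \<pi> x \<in> P (\<pi> a)"
proof -
  obtain k where "k < card (P a)" "x = enum a k"
    using block_elem_enum[OF assms(1,3)] .
  then show ?thesis
    using canonical_map_enum[OF assms(1)] enum_in_block[OF assms(2)] card_block_pos[OF assms(2)]
    by simp
qed

lemma inj_on_canonical_map:
  assumes a: "a \<in> {1..n}" and \<pi>a: "\<pi> a \<in> {1..n}" and le: "card (P a) \<le> card (P (\<pi> a))"
  shows "inj_on (canonical_map \<pi>) (P a)"
proof
  fix x y
  assume "x \<in> P a" "y \<in> P a" and eq: "canonical_map \<pi> x = canonical_map \<pi> y"
  obtain k l where kl: "k < card (P a)" "x = enum a k" "l < card (P a)" "y = enum a l"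
    using block_elem_enum[OF a \<open>x \<in> P a\<close>] block_elem_enum[OF a \<open>y \<in> P a\<close>] by metis
  have "enum (\<pi> a) k = enum (\<pi> a) l"
    using eq kl le by (simp add: canonical_map_enum[OF a])
  moreover have "inj_on (enum (\<pi> a)) {0..<card (P (\<pi> a))}"
    using bij_betw_enum[OF \<pi>a] by (rule bij_betw_imp_inj_on)
  ultimately show "x = y"
    using kl le by (auto dest: inj_onD)
qed

lemma canonical_map_image:
  assumes a: "a \<in> {1..n}" and \<pi>a: "\<pi> a \<in> {1..n}" and le: "card (P (\<pi> a)) \<le> card (P a)"
  shows "canonical_map \<pi> ` P a = P (\<pi> a)"
proof
  show "canonical_map \<pi> ` P a \<subseteq> P (\<pi> a)"
    using canonical_map_block[where \<pi> = \<pi>, OF a \<pi>a] by blast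
  show "P (\<pi> a) \<subseteq> canonical_map \<pi> ` P a"
  proof
    fix y
    assume "y \<in> P (\<pi> a)"
    then obtain k where k: "k < card (P (\<pi> a))" "y = enum (\<pi> a) k"
      using block_elem_enum[OF \<pi>a] by blast
    then have "canonical_map \<pi> (enum a k) = y" and "enum a k \<in> P a"
      using le canonical_map_enum[OF a] enum_in_block[OF a] by auto
    then show "y \<in> canonical_map \<pi> ` P a"
      by blast
  qed
qed

lemma canonical_map_in_Tpart:
  assumes \<pi>: "bij_betw \<pi> {1..n} {1..n}"
  shows "canonical_map \<pi> \<in> Tpart X n P"
proof -
  have "canonical_map \<pi> x \<in> X" if "x \<in> X" for x
    using that blocks_cover canonical_map_block bij_betwE[OF \<pi>] block_subset by blast
  moreover have "\<exists>j\<in>{1..n}. canonical_map \<pi> ` P i \<subseteq> P j" if "i \<in> {1..n}" for i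
    using that canonical_map_block bij_betwE[OF \<pi>] by blast
  ultimately show ?thesis
    by (auto simp: Tpart_def canonical_map_outside)
qed

lemma canonical_map_in_Sigmapart:
  assumes \<pi>: "bij_betw \<pi> {1..n} {1..n}"
  shows "canonical_map \<pi> \<in> Sigmapart X n P"
proof -
  have "canonical_map \<pi> ` X \<inter> P i \<noteq> {}" if "i \<in> {1..n}" for i
  proof -
    obtain a where a: "a \<in> {1..n}" "\<pi> a = i"
      using \<pi> \<open>i \<in> {1..n}\<close> by (metis bij_betw_iff_bijections)
    obtain x where "x \<in> P a"
      using block_nonempty a(1) by blast
    then show ?thesis
      using canonical_map_block[of a \<pi> x] a block_subset that by blast
  qed
  then show ?thesis
    using canonical_map_in_Tpart[OF \<pi>] by (simp add: Sigmapart_def)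
qed

lemma fbar_eqI:
  assumes "a \<in> {1..n}" and "j \<in> {1..n}" and "g ` P a \<subseteq> P j"
  shows "fbar n P g a = j"
  unfolding fbar_def
proof (rule the_equality)
  show "j \<in> {1..n} \<and> g ` P a \<subseteq> P j"
    using assms(2,3) by simp
next
  fix j'
  assume j': "j' \<in> {1..n} \<and> g ` P a \<subseteq> P j'"
  obtain x where "x \<in> P a"
    using block_nonempty assms(1) by blast
  then show "j' = j"
    using block_eqI[of j' j "g x"] j' assms by blast
qed

lemma companion_canonical_map:
  assumes \<pi>: "bij_betw \<pi> {1..n} {1..n}"
  shows "companion X n P \<pi> (canonical_map \<pi>)"
proof -
  have "fbar n P (canonical_map \<pi>) i = \<pi> i" if "i \<in> {1..n}" for i
    using that canonical_map_block bij_betwE[OF \<pi>] by (blast intro: fbar_eqI)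
  then show ?thesis
    unfolding companion_def
    using canonical_map_in_Sigmapart[OF \<pi>] inj_on_canonical_map canonical_map_image
      bij_betwE[OF \<pi>] by blast
qed

lemma canonical_map_in_Spart:
  assumes \<pi>: "bij_betw \<pi> {1..n} {1..n}" and same_size: "\<forall>a\<in>{1..n}. card (P (\<pi> a)) = card (P a)"
  shows "canonical_map \<pi> \<in> Spart X n P"
proof -
  define \<sigma> where "\<sigma> = inv_into {1..n} \<pi>"
  have \<sigma>: "bij_betw \<sigma> {1..n} {1..n}"
    unfolding \<sigma>_def using \<pi> by (rule bij_betw_inv_into)
  have \<sigma>\<pi>: "\<forall>a\<in>{1..n}. (\<sigma> \<circ> \<pi>) a = id a" and \<pi>\<sigma>: "\<forall>a\<in>{1..n}. (\<pi> \<circ> \<sigma>) a = id a"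
    unfolding \<sigma>_def using \<pi> by (auto simp: bij_betw_inv_into_left bij_betw_inv_into_right)
  have "canonical_map \<sigma> \<circ> canonical_map \<pi> = canonical_map (\<sigma> \<circ> \<pi>)"
    using bij_betwE[OF \<pi>] same_size by (intro canonical_map_comp) auto
  also have "\<dots> = id"
    by (metis canonical_map_cong[OF \<sigma>\<pi>] canonical_map_id)
  moreover have "canonical_map \<pi> \<circ> canonical_map \<sigma> = canonical_map (\<pi> \<circ> \<sigma>)"
    using bij_betwE[OF \<sigma>] same_size by (intro canonical_map_comp) (auto simp: \<pi>\<sigma>)
  moreover have "\<dots> = id"
    by (metis canonical_map_cong[OF \<pi>\<sigma>] canonical_map_id)
  ultimately show ?thesis
    using canonical_map_in_Tpart[OF \<pi>] canonical_map_in_Tpart[OF \<sigma>] by (auto simp: Spart_def)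
qed

lemma canonical_map_transpose_in_Bpart:
  assumes b: "b \<in> {1..n}" and c: "c \<in> {1..n}" and i: "i \<in> {1..rnum n P - 1}"
    and size_c: "lsize n P i = card (P c)" and size_b: "lsize n P (i + 1) = card (P b)"
    and smaller: "card (P c) < card (P b)"
  shows "canonical_map (transpose b c) \<in> Bpart X n P"
proof -
  define \<tau> where "\<tau> = transpose b c"
  have \<tau>: "bij_betw \<tau> {1..n} {1..n}"
    using b c by (simp add: \<tau>_def)
  have "\<tau> c = b" "\<tau> b = c"
    by (simp_all add: \<tau>_def)
  then have into: "inj_on (canonical_map \<tau>) (P c) \<and> canonical_map \<tau> ` P c \<subseteq> P b"
    and onto: "canonical_map \<tau> ` P b = P c"
    using inj_on_canonical_map[OF c] canonical_map_block[OF c] canonical_map_image[OF b] b c smaller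
    by auto
  have "bij_betw (canonical_map \<tau>) (P m) (P m)" if "m \<in> {1..n} - {c, b}" for m
  proof -
    have "\<tau> m = m"
      using that by (simp add: \<tau>_def)
    then show ?thesis
      using that inj_on_canonical_map canonical_map_image by (simp add: bij_betw_def)
  qed
  then have others: "\<forall>m\<in>{1..n} - {c, b}. \<exists>m'\<in>{1..n}.
      bij_betw (canonical_map \<tau>) (P m) (P m') \<and> card (P m') = card (P m)"
    by blast
  have "canonical_map \<tau> \<in> Bpart_i X n P i"
    unfolding Bpart_i_def mem_Collect_eq
    by (rule conjI[OF canonical_map_in_Sigmapart[OF \<tau>] bexI[OF bexI[OF bexI[OF bexI[OF _ b] b] c] c]])
      (use into onto others size_b size_c in simp)
  then show ?thesis
    unfolding Bpart_def \<tau>_def using i by blast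
qed

lemma canonical_map_in_gensemi:
  assumes "bij_betw \<pi> {1..n} {1..n}"
  shows "canonical_map \<pi> \<in> gensemi (Spart X n P \<union> Bpart X n P)"
  using assms
proof (induction "nat (size_defect (\<lambda>a. card (P a)) {1..n} \<pi>)" arbitrary: \<pi> rule: less_induct)
  case less
  note \<pi> = less.prems
  show ?case
  proof (cases "\<forall>a\<in>{1..n}. card (P (\<pi> a)) = card (P a)")
    case True
    then show ?thesis
      using canonical_map_in_Spart[OF \<pi>] by (blast intro: gensemi.base)
  next
    case False
    then obtain b c where b: "b \<in> {1..n}" and c: "c \<in> {1..n}" and smaller: "card (P c) < card (P b)"
      and consecutive: "\<forall>a\<in>{1..n}. card (P a) < card (P b) \<longrightarrow> card (P a) \<le> card (P c)"
      and \<pi>b: "card (P (\<pi> b)) \<le> card (P c)" and \<pi>bc: "card (P (\<pi> b)) < card (P (\<pi> c))"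
      using exchangeable_pair_exists[of "{1..n}" \<pi> "\<lambda>a. card (P a)"] \<pi> by auto
    define \<tau> where "\<tau> = transpose b c"
    define \<rho> where "\<rho> = \<pi> \<circ> \<tau>"
    have \<tau>: "bij_betw \<tau> {1..n} {1..n}"
      using b c by (simp add: \<tau>_def)
    have \<rho>: "bij_betw \<rho> {1..n} {1..n}"
      unfolding \<rho>_def using \<tau> \<pi> by (rule bij_betw_trans)
    have "min (card (P a)) (card (P (\<rho> (\<tau> a)))) \<le> card (P (\<tau> a))" if "a \<in> {1..n}" for a
      using smaller \<pi>b by (cases "a = b"; cases "a = c") (auto simp: \<rho>_def \<tau>_def)
    then have "canonical_map \<rho> \<circ> canonical_map \<tau> = canonical_map (\<rho> \<circ> \<tau>)"
      using bij_betwE[OF \<tau>] by (intro canonical_map_comp) auto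
    also have "\<rho> \<circ> \<tau> = \<pi>"
      by (simp add: \<rho>_def \<tau>_def comp_assoc)
    finally have factor: "canonical_map \<pi> = canonical_map \<rho> \<circ> canonical_map \<tau>" ..
    have "size_defect (\<lambda>a. card (P a)) {1..n} \<rho> < size_defect (\<lambda>a. card (P a)) {1..n} \<pi>"
      unfolding \<rho>_def \<tau>_def using b c smaller \<pi>bc by (intro size_defect_comp_transpose_less) auto
    then have \<rho>_gen: "canonical_map \<rho> \<in> gensemi (Spart X n P \<union> Bpart X n P)"
      using less.hyps \<rho> size_defect_nonneg by (metis nat_less_eq_zless)
    obtain i where "i \<in> {1..rnum n P - 1}" "lsize n P i = card (P c)"
      "lsize n P (i + 1) = card (P b)"
      using lsize_consecutive[OF c b smaller consecutive] .
    then have \<tau>_gen: "canonical_map \<tau> \<in> gensemi (Spart X n P \<union> Bpart X n P)"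
      unfolding \<tau>_def using canonical_map_transpose_in_Bpart b c smaller by (blast intro: gensemi.base)
    show ?thesis
      unfolding factor using \<tau>_gen \<rho>_gen by (rule gensemi.comp)
  qed
qed

lemma fbar_block:
  assumes "f \<in> Tpart X n P" and "a \<in> {1..n}"
  shows "fbar n P f a \<in> {1..n}" and "f ` P a \<subseteq> P (fbar n P f a)"
proof -
  obtain j where "j \<in> {1..n}" "f ` P a \<subseteq> P j"
    using assms unfolding Tpart_def by blast
  then show "fbar n P f a \<in> {1..n}" and "f ` P a \<subseteq> P (fbar n P f a)"
    using fbar_eqI[OF assms(2)] by auto
qed

lemma bij_betw_fbar:
  assumes f: "f \<in> Sigmapart X n P"
  shows "bij_betw (fbar n P f) {1..n} {1..n}"
proof -
  have fT: "f \<in> Tpart X n P"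
    using f by (simp add: Sigmapart_def)
  have "fbar n P f ` {1..n} = {1..n}"
  proof
    show "fbar n P f ` {1..n} \<subseteq> {1..n}"
      using fbar_block(1)[OF fT] by blast
    show "{1..n} \<subseteq> fbar n P f ` {1..n}"
    proof
      fix j
      assume j: "j \<in> {1..n}"
      then have "f ` X \<inter> P j \<noteq> {}"
        using f by (simp add: Sigmapart_def)
      then obtain x where x: "x \<in> X" "f x \<in> P j"
        by blast
      then obtain a where a: "a \<in> {1..n}" "x \<in> P a"
        using blocks_cover by blast
      then have "fbar n P f a = j"
        using fbar_block[OF fT a(1)] block_eqI j x(2) by blast
      then show "j \<in> fbar n P f ` {1..n}"
        using a(1) by blast
    qed
  qed
  then show ?thesis
    by (simp add: bij_betw_def eq_card_imp_inj_on)
qed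

end

theorem lemma4p4:
  fixes X :: "'a set" and n :: nat and P :: "nat \<Rightarrow> 'a set" and f :: "'a \<Rightarrow> 'a"
  assumes "finite X" and "X \<noteq> {}"
    and "\<forall>i\<in>{1..n}. P i \<noteq> {}"
    and "\<forall>i\<in>{1..n}. \<forall>j\<in>{1..n}. i \<noteq> j \<longrightarrow> P i \<inter> P j = {}"
    and "(\<Union>i\<in>{1..n}. P i) = X"
    and "\<forall>i. 1 \<le> i \<and> i < n \<longrightarrow> card (P i) \<le> card (P (i + 1))"
    and "f \<in> Sigmapart X n P"
  shows "\<exists>g. companion X n P (fbar n P f) g \<and> g \<in> gensemi (Spart X n P \<union> Bpart X n P)"
proof -
  interpret block_partition X n P
    using assms(1,3-5) by unfold_locales
  have "bij_betw (fbar n P f) {1..n} {1..n}"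
    using assms(7) by (rule bij_betw_fbar)
  then show ?thesis
    using companion_canonical_map canonical_map_in_gensemi by blast
qed

end
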